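(* Let $(S,\|\cdot\|)$ be a complete $RN$ module over $K$ with base $(\Omega,\mathcal F,P)$, let $\{T(t):t\geq 0\}$ be an a.s. bounded $C_{0}$--semigroup on $S$ with infinitesimal generator $(A,D(A))$. Given $x\in D(A)$, define $f:[0,+\infty)\to S$ by $f(t)=T(t)x$. Then for every $x\in D(A)$ and every real $r>0$, $f$ is $L^{0}$-Lipschitz on $[0,r]$, i.e. there exists $\xi\in L^0_+(\mathcal F)$ with $\|f(t_1)-f(t_2)\|\le \xi|t_1-t_2|$ for all $t_1,t_2\in[0,r]$.
   Context: $(\Omega,\mathcal F,P)$ is a probability space; $L^{0}(\mathcal F,K)$ ($K=R$ or $C$) is the algebra of equivalence classes of $K$-valued $\mathcal F$-measurable random variables, ordered a.s.; $L^{0}_{+}(\mathcal F)=\{\xi\in L^0(\mathcal F,R):\xi\ge 0\}$. Suprema are taken in the complete lattice of extended random variables. An $RN$ module over $K$ with base $(\Omega,\mathcal F,P)$ is a left $L^0(\mathcal F,K)$-module $S$ with a map $\|\cdot\|:S\to L^0_+(\mathcal F)$ such that $\|\xi x\|=|\xi|\|x\|$, $\|x+y\|\le\|x\|+\|y\|$, and $\|x\|=0$ implies $x=0$; it carries the $(\varepsilon,\lambda)$-topology, in which $x_n\to x$ iff $\|x_n-x\|\to0$ in probability; completeness refers to this topology. $B(S)$ is the set of continuous module homomorphisms $S\to S$ (equivalently $\|Tx\|\le \xi\|x\|$ for some $\xi\in L^0_+(\mathcal F)$), with $\|T\|=\bigwedge\{\xi\in L^0_+(\mathcal F):\|Tx\|\le\xi\|x\|\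 \forall x\}$. A $C_0$--semigroup is $\{T(t):t\ge0\}\subset B(S)$ with $T(0)=I$, $T(s)T(t)=T(s+t)$, $\lim_{t\downarrow0}T(t)x=x$ for all $x$. It is a.s. bounded if there is a real $L>0$ with $\bigvee_{t\in[0,L]}\|T(t)\|\in L^0_+(\mathcal F)$. Its infinitesimal generator is $Ax=\lim_{t\downarrow0}\frac{T(t)x-x}{t}$ on $D(A)=\{x:\text{the limit exists}\}$. *)

theory Defs
  imports "HOL-Probability.Probability"
begin

text \<open>
L0(F,K) is represented by F-measurable functions Omega to K ('k); two
representatives equal a.e. denote the same class. The module S is the type 'a with
its additive group structure; sm is the L0-action (on representatives, and it must
not depend on the representative), nrm x is a representative of the L0-norm of x.
\<close>

definition RN_module ::
  "'w measure \<Rightarrow> (('w \<Rightarrow> 'k::real_normed_field) \<Rightarrow> 'a::ab_group_add \<Rightarrow> 'a) \<Rightarrow> ('a \<Rightarrow> 'w \<Rightarrow> real) \<Rightarrow> bool"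
  where
  "RN_module M sm nrm \<longleftrightarrow>
     prob_space M \<and>
     (\<forall>x. nrm x \<in> borel_measurable M \<and> (AE \<omega> in M. 0 \<le> nrm x \<omega>)) \<and>
     (\<forall>\<xi>\<in>borel_measurable M. \<forall>\<eta>\<in>borel_measurable M. \<forall>x y.
         sm (\<lambda>\<omega>. \<xi> \<omega> * \<eta> \<omega>) x = sm \<xi> (sm \<eta> x) \<and>
         sm (\<lambda>\<omega>. \<xi> \<omega> + \<eta> \<omega>) x = sm \<xi> x + sm \<eta> x \<and>
         sm \<xi> (x + y) = sm \<xi> x + sm \<xi> y) \<and>
     (\<forall>x. sm (\<lambda>\<omega>. 1) x = x) \<and>
     (\<forall>\<xi>\<in>borel_measurable M. \<forall>\<eta>\<in>borel_measurable M. \<forall>x.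
         (AE \<omega> in M. \<xi> \<omega> = \<eta> \<omega>) \<longrightarrow> sm \<xi> x = sm \<eta> x) \<and>
     (\<forall>\<xi>\<in>borel_measurable M. \<forall>x. AE \<omega> in M. nrm (sm \<xi> x) \<omega> = norm (\<xi> \<omega>) * nrm x \<omega>) \<and>
     (\<forall>x y. AE \<omega> in M. nrm (x + y) \<omega> \<le> nrm x \<omega> + nrm y \<omega>) \<and>
     (\<forall>x. (AE \<omega> in M. nrm x \<omega> = 0) \<longrightarrow> x = 0)"

text \<open>Convergence in the (epsilon,lambda)-topology along a filter: the norm of the
difference tends to 0 in probability.\<close>
definition tendsto_el ::
  "'w measure \<Rightarrow> ('a::ab_group_add \<Rightarrow> 'w \<Rightarrow> real) \<Rightarrow> ('i \<Rightarrow> 'a) \<Rightarrow> 'a \<Rightarrow> 'i filter \<Rightarrow> bool"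
  where
  "tendsto_el M nrm g y F \<longleftrightarrow>
     (\<forall>\<epsilon>>0. ((\<lambda>i. measure M {\<omega>\<in>space M. \<epsilon> \<le> nrm (g i - y) \<omega>}) \<longlongrightarrow> 0) F)"

text \<open>Cauchy sequences for the (epsilon,lambda)-uniformity and completeness
(the topology is metrizable, so sequential completeness is completeness).\<close>
definition cauchy_el :: "'w measure \<Rightarrow> ('a::ab_group_add \<Rightarrow> 'w \<Rightarrow> real) \<Rightarrow> (nat \<Rightarrow> 'a) \<Rightarrow> bool"
  where
  "cauchy_el M nrm X \<longleftrightarrow>
     (\<forall>\<epsilon>>0. \<forall>\<delta>>0. \<exists>N. \<forall>m\<ge>N. \<forall>n\<ge>N.
        measure M {\<omega>\<in>space M. \<epsilon> \<le> nrm (X m - X n) \<omega>} < \<delta>)"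

definition complete_el :: "'w measure \<Rightarrow> ('a::ab_group_add \<Rightarrow> 'w \<Rightarrow> real) \<Rightarrow> bool"
  where
  "complete_el M nrm \<longleftrightarrow>
     (\<forall>X. cauchy_el M nrm X \<longrightarrow> (\<exists>y. tendsto_el M nrm X y sequentially))"

definition bounded_op ::
  "'w measure \<Rightarrow> (('w \<Rightarrow> 'k::real_normed_field) \<Rightarrow> 'a::ab_group_add \<Rightarrow> 'a) \<Rightarrow> ('a \<Rightarrow> 'w \<Rightarrow> real) \<Rightarrow> ('a \<Rightarrow> 'a) \<Rightarrow> bool"
  where
  "bounded_op M sm nrm T \<longleftrightarrow>
     (\<forall>x y. T (x + y) = T x + T y) \<and>
     (\<forall>\<xi>\<in>borel_measurable M. \<forall>x. T (sm \<xi> x) = sm \<xi> (T x)) \<and>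
     (\<exists>\<xi>\<in>borel_measurable M. (AE \<omega> in M. 0 \<le> \<xi> \<omega>) \<and>
        (\<forall>x. AE \<omega> in M. nrm (T x) \<omega> \<le> \<xi> \<omega> * nrm x \<omega>))"

definition is_ess_inf :: "'w measure \<Rightarrow> ('w \<Rightarrow> real) set \<Rightarrow> ('w \<Rightarrow> real) \<Rightarrow> bool"
  where
  "is_ess_inf M F g \<longleftrightarrow>
     g \<in> borel_measurable M \<and>
     (\<forall>\<xi>\<in>F. AE \<omega> in M. g \<omega> \<le> \<xi> \<omega>) \<and>
     (\<forall>h\<in>borel_measurable M. (\<forall>\<xi>\<in>F. AE \<omega> in M. h \<omega> \<le> \<xi> \<omega>) \<longrightarrow> (AE \<omega> in M. h \<omega> \<le> g \<omega>))"

definition is_op_norm ::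
  "'w measure \<Rightarrow> ('a \<Rightarrow> 'w \<Rightarrow> real) \<Rightarrow> ('a \<Rightarrow> 'a) \<Rightarrow> ('w \<Rightarrow> real) \<Rightarrow> bool"
  where
  "is_op_norm M nrm T g \<longleftrightarrow>
     is_ess_inf M {\<xi>. \<xi> \<in> borel_measurable M \<and> (AE \<omega> in M. 0 \<le> \<xi> \<omega>) \<and>
                      (\<forall>x. AE \<omega> in M. nrm (T x) \<omega> \<le> \<xi> \<omega> * nrm x \<omega>)} g"

definition C0_semigroup ::
  "'w measure \<Rightarrow> (('w \<Rightarrow> 'k::real_normed_field) \<Rightarrow> 'a::ab_group_add \<Rightarrow> 'a) \<Rightarrow> ('a \<Rightarrow> 'w \<Rightarrow> real) \<Rightarrow> (real \<Rightarrow> 'a \<Rightarrow> 'a) \<Rightarrow> bool"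
  where
  "C0_semigroup M sm nrm T \<longleftrightarrow>
     (\<forall>t\<ge>0. bounded_op M sm nrm (T t)) \<and>
     T 0 = id \<and>
     (\<forall>s\<ge>0. \<forall>t\<ge>0. T s \<circ> T t = T (s + t)) \<and>
     (\<forall>x. tendsto_el M nrm (\<lambda>t. T t x) x (at_right 0))"

text \<open>a.s. bounded: for some real L > 0 the supremum of ||T(t)||, t in [0,L], is in
L0_+ (i.e. is bounded by some finite random variable eta).\<close>
definition as_bounded :: "'w measure \<Rightarrow> ('a \<Rightarrow> 'w \<Rightarrow> real) \<Rightarrow> (real \<Rightarrow> 'a \<Rightarrow> 'a) \<Rightarrow> bool"
  where
  "as_bounded M nrm T \<longleftrightarrow>
     (\<exists>L>0. \<exists>\<eta>\<in>borel_measurable M. \<forall>t\<in>{0..L}.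
        \<exists>g. is_op_norm M nrm (T t) g \<and> (AE \<omega> in M. g \<omega> \<le> \<eta> \<omega>))"

definition gen_domain ::
  "'w measure \<Rightarrow> (('w \<Rightarrow> 'k::real_normed_field) \<Rightarrow> 'a::ab_group_add \<Rightarrow> 'a) \<Rightarrow> ('a \<Rightarrow> 'w \<Rightarrow> real) \<Rightarrow> (real \<Rightarrow> 'a \<Rightarrow> 'a) \<Rightarrow> 'a set"
  where
  "gen_domain M sm nrm T =
     {x. \<exists>y. tendsto_el M nrm (\<lambda>t. sm (\<lambda>\<omega>. of_real (1 / t)) (T t x - x)) y (at_right 0)}"

end

theory Submission
  imports Defs
begin

text \<open>
Write \<open>y = A x\<close> and let \<open>E\<close> bound \<open>\<parallel>T(s)\<parallel>\<close> for \<open>s \<in> [0, r]\<close> (a.s. boundedness on \<open>[0, L]\<close>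
and \<open>T(m u) = T(u)\<^sup>m\<close> give \<open>E = max 1 \<eta> ^ m\<close>). For \<open>0 \<le> b \<le> a \<le> r\<close> and \<open>q = (a - b) / n\<close>
the increment telescopes as \<open>T(a)x - T(b)x = \<Sum>k<n. T(b + k q)(T(q)x - x)\<close>, hence
\<open>\<parallel>T(a)x - T(b)x\<parallel> \<le> E (a - b) \<parallel>(T(q)x - x)/q\<parallel> \<le> E (a - b) (\<parallel>(T(q)x - x)/q - y\<parallel> + \<parallel>y\<parallel>)\<close>.
As \<open>n \<rightarrow> \<infinity>\<close>, \<open>\<parallel>(T(q)x - x)/q - y\<parallel> \<rightarrow> 0\<close> in probability, which leaves
\<open>\<parallel>T(a)x - T(b)x\<parallel> \<le> E \<parallel>y\<parallel> (a - b)\<close> almost surely.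
\<close>

lemma (in finite_measure) AE_le_0_if_le_tendsto_in_measure:
  fixes V :: "'a \<Rightarrow> real" and W :: "nat \<Rightarrow> 'a \<Rightarrow> real"
  assumes V[measurable]: "V \<in> borel_measurable M"
    and W[measurable]: "\<And>n. W n \<in> borel_measurable M"
    and le: "\<And>n. AE \<omega> in M. V \<omega> \<le> W n \<omega>"
    and lim: "\<And>\<epsilon>. \<epsilon> > 0 \<Longrightarrow> (\<lambda>n. measure M {\<omega>\<in>space M. \<epsilon> \<le> W n \<omega>}) \<longlonglongrightarrow> 0"
  shows "AE \<omega> in M. V \<omega> \<le> 0"
proof -
  have less: "AE \<omega> in M. V \<omega> < \<epsilon>" if \<epsilon>: "\<epsilon> > 0" for \<epsilon> :: real
  proof -
    have "measure M {\<omega>\<in>space M. \<epsilon> \<le> V \<omega>} \<le> measure M {\<omega>\<in>space M. \<epsilon> \<le> W n \<omega>}" for n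
      by (rule finite_measure_mono_AE) (use le[of n] in \<open>auto\<close>)
    then have "measure M {\<omega>\<in>space M. \<epsilon> \<le> V \<omega>} \<le> 0"
      by (intro LIMSEQ_le_const[OF lim[OF \<epsilon>]]) auto
    then have "measure M {\<omega>\<in>space M. \<epsilon> \<le> V \<omega>} = 0"
      by (simp add: measure_le_0_iff)
    then show ?thesis
      by (subst AE_iff_measurable[of "{\<omega>\<in>space M. \<epsilon> \<le> V \<omega>}"])
        (auto simp: emeasure_eq_measure)
  qed
  have "AE \<omega> in M. \<forall>m. V \<omega> < inverse (real (Suc m))"
    using less by (subst AE_all_countable) auto
  then show ?thesis
    by eventually_elim (metis reals_Archimedean less_asym not_le)
qed

definition op_bounded_by :: "'w measure \<Rightarrow> ('a \<Rightarrow> 'w \<Rightarrow> real) \<Rightarrow> ('a \<Rightarrow> 'a) \<Rightarrow> ('w \<Rightarrow> real) \<Rightarrow> bool"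
  where "op_bounded_by M nrm S \<eta> \<longleftrightarrow> (\<forall>x. AE \<omega> in M. nrm (S x) \<omega> \<le> \<eta> \<omega> * nrm x \<omega>)"

locale rn_module =
  fixes M :: "'w measure"
    and sm :: "('w \<Rightarrow> 'k::real_normed_field) \<Rightarrow> 'a::ab_group_add \<Rightarrow> 'a"
    and nrm :: "'a \<Rightarrow> 'w \<Rightarrow> real"
  assumes RN_module: "RN_module M sm nrm"
begin

lemma prob_space: "prob_space M"
  using RN_module unfolding RN_module_def by (elim conjE) blast

sublocale prob_space M
  by (rule prob_space)

lemma nrm_measurable[measurable]: "nrm x \<in> borel_measurable M"
  using RN_module unfolding RN_module_def by (elim conjE) blast

lemma nrm_nonneg: "AE \<omega> in M. 0 \<le> nrm x \<omega>"
  using RN_module unfolding RN_module_def by (elim conjE) blast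

lemma nrm_triangle: "AE \<omega> in M. nrm (x + y) \<omega> \<le> nrm x \<omega> + nrm y \<omega>"
  using RN_module unfolding RN_module_def by (elim conjE) blast

lemma nrm_sm:
  "\<xi> \<in> borel_measurable M \<Longrightarrow> AE \<omega> in M. nrm (sm \<xi> x) \<omega> = norm (\<xi> \<omega>) * nrm x \<omega>"
  using RN_module unfolding RN_module_def by (elim conjE) blast

lemma sm_add:
  "\<xi> \<in> borel_measurable M \<Longrightarrow> \<eta> \<in> borel_measurable M \<Longrightarrow>
    sm (\<lambda>\<omega>. \<xi> \<omega> + \<eta> \<omega>) x = sm \<xi> x + sm \<eta> x"
  using RN_module unfolding RN_module_def by (elim conjE) blast

lemma sm_one: "sm (\<lambda>\<omega>. 1) x = x"
  using RN_module unfolding RN_module_def by (elim conjE) blast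

lemma sm_zero: "sm (\<lambda>\<omega>. 0) x = 0"
  using sm_add[of "\<lambda>\<omega>. 0" "\<lambda>\<omega>. 0" x] by simp

lemma sm_minus_one: "sm (\<lambda>\<omega>. - 1) x = - x"
  using sm_add[of "\<lambda>\<omega>. 1" "\<lambda>\<omega>. - 1" x]
  by (simp add: sm_zero sm_one eq_neg_iff_add_eq_0 add.commute)

lemma nrm_zero: "AE \<omega> in M. nrm 0 \<omega> = 0"
  using nrm_sm[of "\<lambda>\<omega>. 0" 0] by (simp add: sm_zero)

lemma nrm_minus_commute: "AE \<omega> in M. nrm (x - y) \<omega> = nrm (y - x) \<omega>"
  using nrm_sm[of "\<lambda>\<omega>. - 1" "y - x"] by (simp add: sm_minus_one)

lemma nrm_sm_of_real: "AE \<omega> in M. nrm (sm (\<lambda>\<omega>. of_real c) x) \<omega> = \<bar>c\<bar> * nrm x \<omega>"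
  using nrm_sm[of "\<lambda>\<omega>. of_real c" x] by simp

lemma nrm_sum_le: "AE \<omega> in M. nrm (\<Sum>k<(n::nat). f k) \<omega> \<le> (\<Sum>k<n. nrm (f k) \<omega>)"
proof (induction n)
  case 0
  then show ?case
    using nrm_zero by eventually_elim simp
next
  case (Suc n)
  then show ?case
    using nrm_triangle[of "\<Sum>k<n. f k" "f n"] by eventually_elim (simp add: add.commute)
qed

lemma op_bounded_by_op_norm:
  assumes "bounded_op M sm nrm S" and "is_op_norm M nrm S g"
  shows "op_bounded_by M nrm S g"
  unfolding op_bounded_by_def
proof
  fix x
  define F where "F = {\<xi>. \<xi> \<in> borel_measurable M \<and> (AE \<omega> in M. 0 \<le> \<xi> \<omega>) \<and>
                      (\<forall>x. AE \<omega> in M. nrm (S x) \<omega> \<le> \<xi> \<omega> * nrm x \<omega>)}"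
  have inf: "is_ess_inf M F g"
    using assms(2) by (simp add: is_op_norm_def F_def)
  obtain \<xi> where "\<xi> \<in> F"
    using assms(1) by (auto simp: bounded_op_def F_def)
  then have bound: "AE \<omega> in M. nrm (S x) \<omega> \<le> \<xi> \<omega> * nrm x \<omega>"
    by (simp add: F_def)
  \<comment> \<open>The pointwise ratio \<open>\<parallel>Sx\<parallel> / \<parallel>x\<parallel>\<close> is a lower bound of \<open>F\<close>, hence below its infimum \<open>g\<close>.\<close>
  define ratio where "ratio = (\<lambda>\<omega>. if 0 < nrm x \<omega> then nrm (S x) \<omega> / nrm x \<omega> else 0)"
  have "ratio \<in> borel_measurable M"
    unfolding ratio_def by measurable
  moreover have "\<forall>\<xi>\<in>F. AE \<omega> in M. ratio \<omega> \<le> \<xi> \<omega>"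
  proof
    fix \<xi> assume "\<xi> \<in> F"
    then have "AE \<omega> in M. 0 \<le> \<xi> \<omega>" and "AE \<omega> in M. nrm (S x) \<omega> \<le> \<xi> \<omega> * nrm x \<omega>"
      by (auto simp: F_def)
    then show "AE \<omega> in M. ratio \<omega> \<le> \<xi> \<omega>"
      by eventually_elim (auto simp: ratio_def divide_le_eq)
  qed
  ultimately have "AE \<omega> in M. ratio \<omega> \<le> g \<omega>"
    using inf by (simp add: is_ess_inf_def)
  then show "AE \<omega> in M. nrm (S x) \<omega> \<le> g \<omega> * nrm x \<omega>"
    using bound nrm_nonneg[of x]
    by eventually_elim (fastforce simp: ratio_def divide_le_eq split: if_splits)
qed

lemma op_bounded_by_mono:
  assumes "op_bounded_by M nrm S \<eta>" and "AE \<omega> in M. \<eta> \<omega> \<le> \<eta>' \<omega>"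
  shows "op_bounded_by M nrm S \<eta>'"
  unfolding op_bounded_by_def
proof
  fix x
  show "AE \<omega> in M. nrm (S x) \<omega> \<le> \<eta>' \<omega> * nrm x \<omega>"
    using assms(1)[unfolded op_bounded_by_def, rule_format, of x] assms(2) nrm_nonneg[of x]
  proof eventually_elim
    case (elim \<omega>)
    then have "\<eta> \<omega> * nrm x \<omega> \<le> \<eta>' \<omega> * nrm x \<omega>"
      by (intro mult_right_mono) auto
    with elim show ?case
      by linarith
  qed
qed

lemma op_bounded_by_comp:
  assumes "op_bounded_by M nrm S \<eta>" and "op_bounded_by M nrm S' \<eta>'"
    and "AE \<omega> in M. 0 \<le> \<eta> \<omega>"
  shows "op_bounded_by M nrm (S \<circ> S') (\<lambda>\<omega>. \<eta> \<omega> * \<eta>' \<omega>)"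
  unfolding op_bounded_by_def
proof
  fix x
  show "AE \<omega> in M. nrm ((S \<circ> S') x) \<omega> \<le> \<eta> \<omega> * \<eta>' \<omega> * nrm x \<omega>"
    using assms(3) assms(1)[unfolded op_bounded_by_def, rule_format, of "S' x"]
      assms(2)[unfolded op_bounded_by_def, rule_format, of x]
  proof eventually_elim
    case (elim \<omega>)
    then have "\<eta> \<omega> * nrm (S' x) \<omega> \<le> \<eta> \<omega> * (\<eta>' \<omega> * nrm x \<omega>)"
      by (intro mult_left_mono) auto
    with elim show ?case
      by (simp add: mult.assoc)
  qed
qed

end

locale rn_semigroup = rn_module M sm nrm
  for M :: "'w measure"
    and sm :: "('w \<Rightarrow> 'k::real_normed_field) \<Rightarrow> 'a::ab_group_add \<Rightarrow> 'a"
    and nrm :: "'a \<Rightarrow> 'w \<Rightarrow> real" +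
  fixes T :: "real \<Rightarrow> 'a \<Rightarrow> 'a"
  assumes C0_semigroup: "C0_semigroup M sm nrm T"
begin

lemma bounded_op: "0 \<le> t \<Longrightarrow> bounded_op M sm nrm (T t)"
  using C0_semigroup unfolding C0_semigroup_def by blast

lemma T_0: "T 0 = id"
  using C0_semigroup unfolding C0_semigroup_def by blast

lemma T_add:
  assumes "0 \<le> s" and "0 \<le> t"
  shows "T s (T t x) = T (s + t) x"
proof -
  have "T s \<circ> T t = T (s + t)"
    using C0_semigroup assms unfolding C0_semigroup_def by blast
  then show ?thesis
    by (metis comp_apply)
qed

lemma T_diff:
  assumes "0 \<le> t"
  shows "T t (x - y) = T t x - T t y"
proof -
  have "T t (x - y + y) = T t (x - y) + T t y"
    using bounded_op[OF assms] unfolding bounded_op_def by blast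
  then show ?thesis
    by (simp add: eq_diff_eq)
qed

lemma op_bounded_by_T_mult:
  assumes "op_bounded_by M nrm (T u) \<eta>" and "AE \<omega> in M. 0 \<le> \<eta> \<omega>" and "0 \<le> u"
  shows "op_bounded_by M nrm (T (real m * u)) (\<lambda>\<omega>. \<eta> \<omega> ^ m)"
proof (induction m)
  case 0
  then show ?case
    by (simp add: T_0 op_bounded_by_def)
next
  case (Suc m)
  have "T (real (Suc m) * u) = T u \<circ> T (real m * u)"
    using \<open>0 \<le> u\<close> by (auto simp: T_add algebra_simps)
  moreover have "(\<lambda>\<omega>. \<eta> \<omega> ^ Suc m) = (\<lambda>\<omega>. \<eta> \<omega> * \<eta> \<omega> ^ m)"
    by simp
  ultimately show ?case
    using op_bounded_by_comp[OF assms(1) Suc assms(2)] by (simp only:)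
qed

lemma op_bounded_on_interval:
  assumes "as_bounded M nrm T"
  obtains E where "E \<in> borel_measurable M" "\<And>\<omega>. 0 < E \<omega>"
    "\<And>s. s \<in> {0..r} \<Longrightarrow> op_bounded_by M nrm (T s) E"
proof -
  obtain L \<eta> where "L > 0" and [measurable]: "\<eta> \<in> borel_measurable M"
    and \<eta>: "\<And>t. t \<in> {0..L} \<Longrightarrow> \<exists>g. is_op_norm M nrm (T t) g \<and> (AE \<omega> in M. g \<omega> \<le> \<eta> \<omega>)"
    using assms unfolding as_bounded_def by metis
  define \<eta>1 where "\<eta>1 = (\<lambda>\<omega>. max 1 (\<eta> \<omega>))"
  have bound_L: "op_bounded_by M nrm (T t) \<eta>1" if t: "t \<in> {0..L}" for t
  proof -
    obtain g where g: "is_op_norm M nrm (T t) g" and "AE \<omega> in M. g \<omega> \<le> \<eta> \<omega>"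
      using \<eta>[OF t] by blast
    from \<open>AE \<omega> in M. g \<omega> \<le> \<eta> \<omega>\<close> have "AE \<omega> in M. g \<omega> \<le> \<eta>1 \<omega>"
      by eventually_elim (simp add: \<eta>1_def)
    with t show ?thesis
      by (intro op_bounded_by_mono[OF op_bounded_by_op_norm[OF bounded_op g]]) auto
  qed
  obtain n :: nat where "r / L \<le> real n"
    using real_arch_simple by blast
  define N where "N = Suc n"
  have "N > 0" and N: "r \<le> real N * L"
    using \<open>r / L \<le> real n\<close> \<open>L > 0\<close> by (auto simp: N_def pos_divide_le_eq algebra_simps)
  show ?thesis
  proof
    show "(\<lambda>\<omega>. \<eta>1 \<omega> ^ N) \<in> borel_measurable M"
      unfolding \<eta>1_def by measurable
    show "0 < \<eta>1 \<omega> ^ N" for \<omega>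
      by (simp add: \<eta>1_def)
    fix s assume s: "s \<in> {0..r}"
    have "s / N \<in> {0..L}"
      using s N \<open>N > 0\<close> by (auto simp: divide_le_eq mult.commute)
    then have "op_bounded_by M nrm (T (real N * (s / N))) (\<lambda>\<omega>. \<eta>1 \<omega> ^ N)"
      by (intro op_bounded_by_T_mult bound_L) (auto simp: \<eta>1_def)
    then show "op_bounded_by M nrm (T s) (\<lambda>\<omega>. \<eta>1 \<omega> ^ N)"
      using \<open>N > 0\<close> by simp
  qed
qed

definition difference_quotient :: "real \<Rightarrow> 'a \<Rightarrow> 'a"
  where "difference_quotient t x = sm (\<lambda>\<omega>. of_real (1 / t)) (T t x - x)"

lemma gen_domain_eq:
  "gen_domain M sm nrm T =
    {x. \<exists>y. tendsto_el M nrm (\<lambda>t. difference_quotient t x) y (at_right 0)}"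
  by (simp add: gen_domain_def difference_quotient_def)

lemma T_increment_telescope:
  assumes "0 \<le> b" and "0 \<le> q"
  shows "T (b + real n * q) x - T b x = (\<Sum>k<n. T (b + real k * q) (T q x - x))"
proof -
  define f where "f k = T (b + real k * q) x" for k
  have "T (b + real k * q) (T q x - x) = f (Suc k) - f k" for k
    using assms by (simp add: f_def T_diff T_add algebra_simps)
  then have "(\<Sum>k<n. T (b + real k * q) (T q x - x)) = f n - f 0"
    by (simp add: sum_lessThan_telescope)
  then show ?thesis
    by (simp add: f_def)
qed

lemma nrm_increment_le_difference_quotient:
  assumes "0 \<le> b" and "0 < q"
    and bound: "\<And>s. s \<in> {b..b + real n * q} \<Longrightarrow> op_bounded_by M nrm (T s) E"
  shows "AE \<omega> in M. nrm (T (b + real n * q) x - T b x) \<omega>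
           \<le> E \<omega> * (real n * q) * nrm (difference_quotient q x) \<omega>"
proof -
  have "AE \<omega> in M. \<forall>k\<in>{..<n}. nrm (T (b + real k * q) (T q x - x)) \<omega> \<le> E \<omega> * nrm (T q x - x) \<omega>"
  proof (subst AE_finite_all, simp, intro ballI)
    fix k assume "k \<in> {..<n}"
    then have "b + real k * q \<in> {b..b + real n * q}"
      using assms(1,2) by auto
    then show "AE \<omega> in M. nrm (T (b + real k * q) (T q x - x)) \<omega> \<le> E \<omega> * nrm (T q x - x) \<omega>"
      using bound op_bounded_by_def by blast
  qed
  then show ?thesis
    using nrm_sum_le[of "\<lambda>k. T (b + real k * q) (T q x - x)" n]
      nrm_sm_of_real[of "1 / q" "T q x - x"]
    unfolding T_increment_telescope[OF assms(1) less_imp_le[OF assms(2)]] difference_quotient_def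
  proof eventually_elim
    case (elim \<omega>)
    have "(\<Sum>k<n. nrm (T (b + real k * q) (T q x - x)) \<omega>) \<le> (\<Sum>k<n. E \<omega> * nrm (T q x - x) \<omega>)"
      using elim(1) by (intro sum_mono) blast
    also have "\<dots> = E \<omega> * (real n * q) * (\<bar>1 / q\<bar> * nrm (T q x - x) \<omega>)"
      using \<open>0 < q\<close> by simp
    finally show ?case
      using elim(2,3) by simp
  qed
qed

lemma nrm_increment_le_generator:
  assumes deriv: "tendsto_el M nrm (\<lambda>t. difference_quotient t x) y (at_right 0)"
    and [measurable]: "E \<in> borel_measurable M" and E_pos: "\<And>\<omega>. 0 < E \<omega>"
    and bound: "\<And>s. s \<in> {b..a} \<Longrightarrow> op_bounded_by M nrm (T s) E"
    and "0 \<le> b" "b \<le> a"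
  shows "AE \<omega> in M. nrm (T a x - T b x) \<omega> \<le> E \<omega> * (a - b) * nrm y \<omega>"
proof (cases "a = b")
  case True
  show ?thesis
    using nrm_zero by eventually_elim (simp add: True)
next
  case False
  define h where "h = a - b"
  have "h > 0"
    using False \<open>b \<le> a\<close> by (simp add: h_def)
  define q where "q = (\<lambda>n::nat. h / real (Suc n))"
  have q_pos: "0 < q n" for n
    using \<open>h > 0\<close> by (simp add: q_def)
  have "q \<longlonglongrightarrow> 0"
    unfolding q_def by (rule LIMSEQ_Suc[OF lim_const_over_n])
  then have q_lim: "filterlim q (at_right 0) sequentially"
    by (rule tendsto_imp_filterlim_at_right) (simp add: q_pos)
  have "AE \<omega> in M. nrm (T a x - T b x) \<omega> / (E \<omega> * h) - nrm y \<omega>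
                     \<le> nrm (difference_quotient (q n) x - y) \<omega>" for n
  proof -
    have a_eq: "b + real (Suc n) * q n = a" and h_eq: "real (Suc n) * q n = h"
      using \<open>h > 0\<close> by (simp_all add: q_def h_def)
    have "AE \<omega> in M. nrm (T (b + real (Suc n) * q n) x - T b x) \<omega>
            \<le> E \<omega> * (real (Suc n) * q n) * nrm (difference_quotient (q n) x) \<omega>"
      by (rule nrm_increment_le_difference_quotient[OF \<open>0 \<le> b\<close> q_pos])
        (simp only: a_eq bound)
    then show ?thesis
      using nrm_triangle[of "difference_quotient (q n) x - y" y]
      unfolding a_eq unfolding h_eq
    proof eventually_elim
      case (elim \<omega>)
      have "0 < E \<omega> * h"
        using E_pos[of \<omega>] \<open>h > 0\<close> by simp
      with elim(1) have "nrm (T a x - T b x) \<omega> / (E \<omega> * h) \<le> nrm (difference_quotient (q n) x) \<omega>"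
        by (simp add: divide_le_eq mult_ac)
      with elim(2) show ?case
        by simp
    qed
  qed
  moreover have "(\<lambda>n. measure M {\<omega>\<in>space M. \<epsilon> \<le> nrm (difference_quotient (q n) x - y) \<omega>}) \<longlonglongrightarrow> 0"
    if "\<epsilon> > 0" for \<epsilon>
    using filterlim_compose[OF deriv[unfolded tendsto_el_def, rule_format, OF that] q_lim] .
  ultimately have "AE \<omega> in M. nrm (T a x - T b x) \<omega> / (E \<omega> * h) - nrm y \<omega> \<le> 0"
    by (rule AE_le_0_if_le_tendsto_in_measure[rotated 2]; measurable)
  then show ?thesis
  proof eventually_elim
    case (elim \<omega>)
    have "0 < E \<omega> * h"
      using E_pos[of \<omega>] \<open>h > 0\<close> by simp
    with elim show ?case
      by (simp add: divide_le_eq h_def mult_ac)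
  qed
qed

lemma nrm_orbit_diff_le:
  assumes deriv: "tendsto_el M nrm (\<lambda>t. difference_quotient t x) y (at_right 0)"
    and "E \<in> borel_measurable M" and "\<And>\<omega>. 0 < E \<omega>"
    and bound: "\<And>s. s \<in> {0..r} \<Longrightarrow> op_bounded_by M nrm (T s) E"
    and "t1 \<in> {0..r}" "t2 \<in> {0..r}"
  shows "AE \<omega> in M. nrm (T t1 x - T t2 x) \<omega> \<le> E \<omega> * nrm y \<omega> * \<bar>t1 - t2\<bar>"
proof (cases "t2 \<le> t1")
  case True
  have "AE \<omega> in M. nrm (T t1 x - T t2 x) \<omega> \<le> E \<omega> * (t1 - t2) * nrm y \<omega>"
    using assms True by (intro nrm_increment_le_generator[OF deriv]) auto
  then show ?thesis
    by eventually_elim (use True in \<open>simp add: mult_ac\<close>)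
next
  case False
  have "AE \<omega> in M. nrm (T t2 x - T t1 x) \<omega> \<le> E \<omega> * (t2 - t1) * nrm y \<omega>"
    using assms False by (intro nrm_increment_le_generator[OF deriv]) auto
  then show ?thesis
    using nrm_minus_commute[of "T t1 x" "T t2 x"]
    by eventually_elim (use False in \<open>simp add: mult_ac\<close>)
qed

end

theorem lemma3p7:
  fixes M :: "'w measure"
    and sm :: "('w \<Rightarrow> 'k::real_normed_field) \<Rightarrow> 'a::ab_group_add \<Rightarrow> 'a"
    and nrm :: "'a \<Rightarrow> 'w \<Rightarrow> real"
    and T :: "real \<Rightarrow> 'a \<Rightarrow> 'a"
  assumes "RN_module M sm nrm"
    and "complete_el M nrm"
    and "C0_semigroup M sm nrm T"
    and "as_bounded M nrm T"
  shows "\<forall>x\<in>gen_domain M sm nrm T. \<forall>r>(0::real).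
           \<exists>\<xi>\<in>borel_measurable M. (AE \<omega> in M. 0 \<le> \<xi> \<omega>) \<and>
             (\<forall>t1\<in>{0..r}. \<forall>t2\<in>{0..r}.
                AE \<omega> in M. nrm (T t1 x - T t2 x) \<omega> \<le> \<xi> \<omega> * \<bar>t1 - t2\<bar>)"
proof (intro ballI allI impI)
  fix x and r :: real
  assume "x \<in> gen_domain M sm nrm T" and "0 < r"
  interpret rn_semigroup M sm nrm T
    using assms(1,3) by unfold_locales
  obtain y where deriv: "tendsto_el M nrm (\<lambda>t. difference_quotient t x) y (at_right 0)"
    using \<open>x \<in> gen_domain M sm nrm T\<close> by (auto simp: gen_domain_eq)
  obtain E where [measurable]: "E \<in> borel_measurable M" and E_pos: "\<And>\<omega>. 0 < E \<omega>"
    and bound: "\<And>s. s \<in> {0..r} \<Longrightarrow> op_bounded_by M nrm (T s) E"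
    using op_bounded_on_interval[OF assms(4)] by blast
  show "\<exists>\<xi>\<in>borel_measurable M. (AE \<omega> in M. 0 \<le> \<xi> \<omega>) \<and>
          (\<forall>t1\<in>{0..r}. \<forall>t2\<in>{0..r}. AE \<omega> in M. nrm (T t1 x - T t2 x) \<omega> \<le> \<xi> \<omega> * \<bar>t1 - t2\<bar>)"
  proof (intro bexI[of _ "\<lambda>\<omega>. E \<omega> * nrm y \<omega>"] conjI ballI)
    show "AE \<omega> in M. 0 \<le> E \<omega> * nrm y \<omega>"
      using nrm_nonneg[of y] by eventually_elim (simp add: E_pos less_imp_le)
    show "AE \<omega> in M. nrm (T t1 x - T t2 x) \<omega> \<le> E \<omega> * nrm y \<omega> * \<bar>t1 - t2\<bar>"
      if "t1 \<in> {0..r}" "t2 \<in> {0..r}" for t1 t2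
      using E_pos that by (intro nrm_orbit_diff_le[OF deriv _ _ bound]) auto
  qed simp
qed

end
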